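(* Let $G$ be a connected block graph on $n$ vertices with set of cut vertices $V_c(G)$, and let $k$ be an integer with $2\le k\le n$. Then $$SW_k(G)=\sum_{v\in V_c(G)} N_k(G\setminus v) + (k-1)\binom{n}{k}.$$
   Context: A block graph is a graph in which every block (maximal connected induced subgraph without cut vertices) is a clique. For connected $G$ and $S\subseteq V(G)$, the Steiner distance $d(S)$ is the minimum number of edges of a connected subgraph of $G$ whose vertex set contains $S$, and $SW_k(G)=\sum_{S\subseteq V(G),|S|=k} d(S)$. $G\setminus v$ is the graph obtained by deleting vertex $v$. For a graph $H$ with $p>1$ connected components $H_1,\dots,H_p$, $$N_k(H)=\sum_{\substack{l_1+\cdots+l_p=k\\0\le l_1,\dots,l_p<k}}\binom{|V(H_1)|}{l_1}\cdots\binom{|V(H_p)|}{l_p},$$ i.e. the number of $k$-subsets of $V(H)$ not contained in a single component; conventions $\binom{m}{0}=1$, $\binom{m}{l}=0$ for $m<l$. *)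

theory Defs
  imports Main "HOL-Library.FuncSet"
begin

definition simple_graph :: "'a set \<Rightarrow> ('a \<Rightarrow> 'a \<Rightarrow> bool) \<Rightarrow> bool" where
  "simple_graph V E \<longleftrightarrow> finite V \<and> (\<forall>x y. E x y \<longrightarrow> E y x) \<and> (\<forall>x. \<not> E x x)
     \<and> (\<forall>x y. E x y \<longrightarrow> x \<in> V \<and> y \<in> V)"

definition reach_in :: "('a \<Rightarrow> 'a \<Rightarrow> bool) \<Rightarrow> 'a set \<Rightarrow> 'a \<Rightarrow> 'a \<Rightarrow> bool" where
  "reach_in E S = (\<lambda>a b. E a b \<and> a \<in> S \<and> b \<in> S)\<^sup>*\<^sup>*"

definition connected_on :: "('a \<Rightarrow> 'a \<Rightarrow> bool) \<Rightarrow> 'a set \<Rightarrow> bool" where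
  "connected_on E S \<longleftrightarrow> S \<noteq> {} \<and> (\<forall>x\<in>S. \<forall>y\<in>S. reach_in E S x y)"

definition components :: "('a \<Rightarrow> 'a \<Rightarrow> bool) \<Rightarrow> 'a set \<Rightarrow> 'a set set" where
  "components E S = (\<lambda>x. {y. reach_in E S x y}) ` S"

definition cut_vertex :: "('a \<Rightarrow> 'a \<Rightarrow> bool) \<Rightarrow> 'a set \<Rightarrow> 'a \<Rightarrow> bool" where
  "cut_vertex E S v \<longleftrightarrow> v \<in> S \<and> card (components E (S - {v})) > card (components E S)"

definition biconn_on :: "('a \<Rightarrow> 'a \<Rightarrow> bool) \<Rightarrow> 'a set \<Rightarrow> bool" where
  "biconn_on E S \<longleftrightarrow> connected_on E S \<and> (\<forall>v. \<not> cut_vertex E S v)"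

definition is_block :: "'a set \<Rightarrow> ('a \<Rightarrow> 'a \<Rightarrow> bool) \<Rightarrow> 'a set \<Rightarrow> bool" where
  "is_block V E B \<longleftrightarrow> B \<subseteq> V \<and> biconn_on E B \<and>
     (\<forall>T. B \<subset> T \<and> T \<subseteq> V \<longrightarrow> \<not> biconn_on E T)"

definition block_graph :: "'a set \<Rightarrow> ('a \<Rightarrow> 'a \<Rightarrow> bool) \<Rightarrow> bool" where
  "block_graph V E \<longleftrightarrow> (\<forall>B. is_block V E B \<longrightarrow> (\<forall>x\<in>B. \<forall>y\<in>B. x \<noteq> y \<longrightarrow> E x y))"

definition connected_subgraph :: "'a set \<Rightarrow> ('a \<Rightarrow> 'a \<Rightarrow> bool) \<Rightarrow> 'a set \<Rightarrow> 'a set set \<Rightarrow> bool" where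
  "connected_subgraph V E W F \<longleftrightarrow> W \<subseteq> V \<and>
     (\<forall>e\<in>F. \<exists>x y. e = {x, y} \<and> E x y \<and> x \<in> W \<and> y \<in> W) \<and>
     W \<noteq> {} \<and> (\<forall>x\<in>W. \<forall>y\<in>W. (\<lambda>a b. {a, b} \<in> F)\<^sup>*\<^sup>* x y)"

definition steiner_dist :: "'a set \<Rightarrow> ('a \<Rightarrow> 'a \<Rightarrow> bool) \<Rightarrow> 'a set \<Rightarrow> nat" where
  "steiner_dist V E S = (LEAST m. \<exists>W F. connected_subgraph V E W F \<and> S \<subseteq> W \<and> card F = m)"

definition steiner_wiener :: "nat \<Rightarrow> 'a set \<Rightarrow> ('a \<Rightarrow> 'a \<Rightarrow> bool) \<Rightarrow> nat" where
  "steiner_wiener k V E = (\<Sum>S\<in>{S. S \<subseteq> V \<and> card S = k}. steiner_dist V E S)"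

definition N_k :: "nat \<Rightarrow> ('a \<Rightarrow> 'a \<Rightarrow> bool) \<Rightarrow> 'a set \<Rightarrow> nat" where
  "N_k k E S = (\<Sum>l\<in>{l \<in> components E S \<rightarrow>\<^sub>E {0..<k}. (\<Sum>C\<in>components E S. l C) = k}.
                  \<Prod>C\<in>components E S. card C choose l C)"

end

theory Submission
  imports Defs
begin

text \<open>
  Let \<open>S\<close> be a nonempty vertex set of a connected block graph and call a vertex outside \<open>S\<close>
  separating if its deletion disconnects two vertices of \<open>S\<close>. Every connected subgraph
  containing \<open>S\<close> contains all separating vertices, so it has at least
  \<open>|S| + #sep(S) - 1\<close> edges. Conversely \<open>S\<close> together with its separating vertices is connected:
  an inner vertex \<open>w\<close> of a geodesic separates the ends of the geodesic (two neighbours of \<open>w\<close>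
  joined by a path avoiding \<open>w\<close> lie in one block, hence are adjacent, shortcutting the
  geodesic), and then it separates \<open>S\<close> as well. A spanning tree of this set attains the bound,
  so \<open>d(S) = |S| - 1 + #sep(S)\<close>. Summing over all \<open>k\<close>-sets and exchanging the order of
  summation, each vertex \<open>v\<close> is counted once for every \<open>k\<close>-subset of \<open>G - v\<close> meeting two
  components of \<open>G - v\<close>: there are \<open>N\<^sub>k(G - v)\<close> of these if \<open>v\<close> is a cut vertex and none
  otherwise.
\<close>

section \<open>Distance along a relation\<close>

text \<open>\<open>gdist R a b\<close> is \<open>0\<close> when \<open>b\<close> is not reachable from \<open>a\<close>.\<close>
definition gdist :: "('a \<Rightarrow> 'a \<Rightarrow> bool) \<Rightarrow> 'a \<Rightarrow> 'a \<Rightarrow> nat" where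
  "gdist R a b = (LEAST n. (R ^^ n) a b)"

lemma gdist_relpowp: "R\<^sup>*\<^sup>* a b \<Longrightarrow> (R ^^ gdist R a b) a b"
  unfolding gdist_def by (metis LeastI_ex rtranclp_imp_relpowp)

lemma gdist_le: "(R ^^ n) a b \<Longrightarrow> gdist R a b \<le> n"
  unfolding gdist_def by (rule Least_le)

lemma gdist_self [simp]: "gdist R a a = 0"
  using gdist_le[where R=R and n=0 and a=a and b=a] by simp

lemma gdist_eq_0_iff: "R\<^sup>*\<^sup>* a b \<Longrightarrow> gdist R a b = 0 \<longleftrightarrow> a = b"
  using gdist_relpowp by fastforce

lemma gdist_le_1: "R a b \<Longrightarrow> gdist R a b \<le> 1"
  by (metis gdist_le relpowp_1)

lemma gdist_triangle:
  assumes "R\<^sup>*\<^sup>* a c" "R\<^sup>*\<^sup>* c b"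
  shows "gdist R a b \<le> gdist R a c + gdist R c b"
proof -
  have "(R ^^ gdist R a c OO R ^^ gdist R c b) a b"
    using gdist_relpowp[OF assms(1)] gdist_relpowp[OF assms(2)] by blast
  then show ?thesis by (simp add: relpowp_add gdist_le)
qed

lemma gdist_le_Suc_first: "R a c \<Longrightarrow> R\<^sup>*\<^sup>* c b \<Longrightarrow> gdist R a b \<le> Suc (gdist R c b)"
  using gdist_triangle[of R a c b] gdist_le_1[of R a c] by fastforce

lemma gdist_le_Suc_last: "R\<^sup>*\<^sup>* a c \<Longrightarrow> R c b \<Longrightarrow> gdist R a b \<le> Suc (gdist R a c)"
  using gdist_triangle[of R a c b] gdist_le_1[of R c b] by fastforce

lemma gdist_first_step:
  assumes "R\<^sup>*\<^sup>* a b" "a \<noteq> b"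
  obtains c where "R a c" "R\<^sup>*\<^sup>* c b" "gdist R a b = Suc (gdist R c b)"
proof -
  obtain m where m: "gdist R a b = Suc m"
    using gdist_eq_0_iff[OF assms(1)] assms(2) not0_implies_Suc by blast
  then obtain c where c: "R a c" "(R ^^ m) c b"
    using gdist_relpowp[OF assms(1)] relpowp_Suc_D2 by metis
  then have "R\<^sup>*\<^sup>* c b" by (metis relpowp_imp_rtranclp)
  moreover have "gdist R c b \<le> m" using c(2) by (rule gdist_le)
  moreover have "gdist R a b \<le> Suc (gdist R c b)" using c(1) calculation(1) by (rule gdist_le_Suc_first)
  ultimately show thesis using that c(1) m by simp
qed

lemma gdist_last_step:
  assumes "R\<^sup>*\<^sup>* a b" "a \<noteq> b"
  obtains c where "R\<^sup>*\<^sup>* a c" "R c b" "gdist R a b = Suc (gdist R a c)"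
proof -
  obtain m where m: "gdist R a b = Suc m"
    using gdist_eq_0_iff[OF assms(1)] assms(2) not0_implies_Suc by blast
  then obtain c where c: "(R ^^ m) a c" "R c b"
    using gdist_relpowp[OF assms(1)] relpowp_Suc_E by metis
  then have "R\<^sup>*\<^sup>* a c" by (metis relpowp_imp_rtranclp)
  moreover have "gdist R a c \<le> m" using c(1) by (rule gdist_le)
  moreover have "gdist R a b \<le> Suc (gdist R a c)" using calculation(1) c(2) by (rule gdist_le_Suc_last)
  ultimately show thesis using that c(2) m by simp
qed

lemma relpowp_symp: "symp R \<Longrightarrow> (R ^^ n) a b \<Longrightarrow> (R ^^ n) b a"
proof (induction n arbitrary: b)
  case (Suc n)
  then obtain c where "(R ^^ n) a c" "R c b" by (metis relpowp_Suc_E)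
  with Suc show ?case by (metis relpowp_Suc_I2 sympD)
qed simp

lemma gdist_commute: "symp R \<Longrightarrow> gdist R a b = gdist R b a"
  unfolding gdist_def by (metis relpowp_symp)

text \<open>The parent map of a breadth-first spanning tree rooted at \<open>r\<close>.\<close>
lemma gdist_parent_map:
  assumes "\<And>w. w \<in> W \<Longrightarrow> R\<^sup>*\<^sup>* w r"
  obtains p where "\<And>w. w \<in> W - {r} \<Longrightarrow> R w (p w) \<and> gdist R (p w) r < gdist R w r"
proof -
  have "\<forall>w\<in>W - {r}. \<exists>c. R w c \<and> gdist R c r < gdist R w r"
  proof
    fix w assume "w \<in> W - {r}"
    then obtain c where "R w c" "gdist R w r = Suc (gdist R c r)"
      using assms gdist_first_step[of R w r] by blast
    then show "\<exists>c. R w c \<and> gdist R c r < gdist R w r" by auto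
  qed
  then show thesis using that by metis
qed

section \<open>Reachability and components\<close>

definition induced_edge :: "('a \<Rightarrow> 'a \<Rightarrow> bool) \<Rightarrow> 'a set \<Rightarrow> 'a \<Rightarrow> 'a \<Rightarrow> bool" where
  "induced_edge E A = (\<lambda>x y. E x y \<and> x \<in> A \<and> y \<in> A)"

lemma reach_in_eq: "reach_in E A = (induced_edge E A)\<^sup>*\<^sup>*"
  unfolding reach_in_def induced_edge_def ..

lemma symp_induced_edge: "symp E \<Longrightarrow> symp (induced_edge E A)"
  unfolding symp_def induced_edge_def by blast

lemma reach_in_refl [simp]: "reach_in E A x x"
  unfolding reach_in_def by simp

lemma reach_in_trans: "reach_in E A x y \<Longrightarrow> reach_in E A y z \<Longrightarrow> reach_in E A x z"
  unfolding reach_in_def by (rule rtranclp_trans)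

lemma reach_in_edge: "E x y \<Longrightarrow> x \<in> A \<Longrightarrow> y \<in> A \<Longrightarrow> reach_in E A x y"
  unfolding reach_in_def by (rule r_into_rtranclp) simp

lemma reach_in_mono: "A \<subseteq> B \<Longrightarrow> reach_in E A x y \<Longrightarrow> reach_in E B x y"
  unfolding reach_in_def by (rule rtranclp_mono[THEN predicate2D]) auto

lemma reach_in_sym: "symp E \<Longrightarrow> reach_in E A x y \<Longrightarrow> reach_in E A y x"
  unfolding reach_in_eq by (rule sympD[OF symp_rtranclp[OF symp_induced_edge]])

lemma reach_in_mem: "reach_in E A x y \<Longrightarrow> x = y \<or> x \<in> A \<and> y \<in> A"
  unfolding reach_in_def by (induction rule: rtranclp_induct) auto

lemma reach_in_restrict:
  assumes "reach_in E A a b"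
  shows "reach_in E (A \<inter> {u. reach_in E A a u}) a b"
  using assms unfolding reach_in_def
proof (induction rule: rtranclp_induct)
  case (step y z)
  have "(\<lambda>a b. E a b \<and> a \<in> A \<and> b \<in> A)\<^sup>*\<^sup>* a z"
    using step(1,2) by (rule rtranclp.rtrancl_into_rtrancl)
  with step show ?case by (auto intro: rtranclp.rtrancl_into_rtrancl)
qed simp

lemma components_subset: "C \<in> components E A \<Longrightarrow> C \<subseteq> A"
  unfolding components_def using reach_in_mem by fastforce

lemma Union_components: "\<Union>(components E A) = A"
proof
  show "\<Union>(components E A) \<subseteq> A" using components_subset by blast
  show "A \<subseteq> \<Union>(components E A)" unfolding components_def by force
qed

lemma finite_components: "finite A \<Longrightarrow> finite (components E A)"
  unfolding components_def by simp

lemma component_in_components: "x \<in> A \<Longrightarrow> {y. reach_in E A x y} \<in> components E A"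
  unfolding components_def by blast

lemma component_eq:
  assumes "symp E" "C \<in> components E A" "x \<in> C"
  shows "C = {y. reach_in E A x y}"
proof -
  obtain z where z: "C = {y. reach_in E A z y}" using assms(2) unfolding components_def by blast
  then have zx: "reach_in E A z x" using assms(3) by blast
  have xz: "reach_in E A x z" using reach_in_sym[OF assms(1) zx] .
  show ?thesis using z reach_in_trans[OF xz] reach_in_trans[OF zx] by blast
qed

lemma components_disjoint:
  assumes "symp E" "C \<in> components E A" "D \<in> components E A" "C \<noteq> D"
  shows "C \<inter> D = {}"
proof (rule ccontr)
  assume "C \<inter> D \<noteq> {}"
  then obtain x where "x \<in> C" "x \<in> D" by blast
  then have "C = D" using component_eq[OF assms(1,2)] component_eq[OF assms(1,3)] by metis
  with assms(4) show False ..
qed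

lemma subset_component_iff:
  assumes "symp E" "S \<subseteq> A" "S \<noteq> {}"
  shows "(\<exists>C\<in>components E A. S \<subseteq> C) \<longleftrightarrow> (\<forall>x\<in>S. \<forall>y\<in>S. reach_in E A x y)"
proof
  assume "\<exists>C\<in>components E A. S \<subseteq> C"
  then show "\<forall>x\<in>S. \<forall>y\<in>S. reach_in E A x y"
    using component_eq[OF assms(1)] by (metis mem_Collect_eq subsetD)
next
  assume "\<forall>x\<in>S. \<forall>y\<in>S. reach_in E A x y"
  moreover obtain s where "s \<in> S" using assms(3) by auto
  ultimately show "\<exists>C\<in>components E A. S \<subseteq> C"
    using component_in_components[of s A E] assms(2) by blast
qed

lemma components_connected_on:
  assumes "connected_on E S"
  shows "components E S = {S}"
proof -
  have "{y. reach_in E S x y} = S" if "x \<in> S" for x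
    using assms that reach_in_mem unfolding connected_on_def by fastforce
  then show ?thesis using assms unfolding components_def connected_on_def by auto
qed

lemma reach_in_if_card_components_le_1:
  assumes "finite A" "card (components E A) \<le> 1" "x \<in> A" "y \<in> A"
  shows "reach_in E A x y"
proof (rule ccontr)
  assume "\<not> reach_in E A x y"
  then have "{z. reach_in E A x z} \<noteq> {z. reach_in E A y z}" by (metis mem_Collect_eq reach_in_refl)
  moreover have "{{z. reach_in E A x z}, {z. reach_in E A y z}} \<subseteq> components E A"
    using component_in_components[OF assms(3)] component_in_components[OF assms(4)] by simp
  then have "card {{z. reach_in E A x z}, {z. reach_in E A y z}} \<le> card (components E A)"
    by (rule card_mono[OF finite_components[OF assms(1)]])
  ultimately show False using assms(2) by simp
qed

lemma connected_onI_hub: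
  assumes "symp E" "h \<in> S" "\<And>x. x \<in> S \<Longrightarrow> reach_in E S x h"
  shows "connected_on E S"
  unfolding connected_on_def
proof (intro conjI ballI)
  fix x y assume "x \<in> S" "y \<in> S"
  then show "reach_in E S x y"
    using assms(3) reach_in_sym[OF assms(1)] reach_in_trans by metis
qed (use assms(2) in blast)

lemma not_cut_vertex_if_connected_on_delete:
  "connected_on E S \<Longrightarrow> connected_on E (S - {v}) \<Longrightarrow> \<not> cut_vertex E S v"
  unfolding cut_vertex_def by (simp add: components_connected_on)

lemma reach_in_delete_non_cut_vertex:
  assumes "finite V" "connected_on E V" "\<not> cut_vertex E V v" "v \<in> V" "x \<in> V - {v}" "y \<in> V - {v}"
  shows "reach_in E (V - {v}) x y"
proof (rule reach_in_if_card_components_le_1)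
  show "card (components E (V - {v})) \<le> 1"
    using assms(2-4) components_connected_on[OF assms(2)] unfolding cut_vertex_def by simp
qed (use assms in auto)

lemma pairwise_disjnt_components: "symp E \<Longrightarrow> pairwise disjnt (components E A)"
  unfolding pairwise_def disjnt_def using components_disjoint by blast

section \<open>Counting subsets of a partition\<close>

lemma card_eq_sum_card_Int:
  assumes "finite K" "\<And>C. C \<in> K \<Longrightarrow> finite C" "pairwise disjnt K" "S \<subseteq> \<Union>K"
  shows "card S = (\<Sum>C\<in>K. card (S \<inter> C))"
proof -
  have "S = (\<Union>C\<in>K. S \<inter> C)" using assms(4) by blast
  also have "card \<dots> = (\<Sum>C\<in>K. card (S \<inter> C))"
  proof (rule card_UN_disjoint)
    show "\<forall>C\<in>K. \<forall>D\<in>K. C \<noteq> D \<longrightarrow> S \<inter> C \<inter> (S \<inter> D) = {}"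
      using assms(3) unfolding pairwise_def disjnt_def by blast
  qed (use assms(1,2) in auto)
  finally show ?thesis .
qed

lemma card_subsets_with_profile:
  assumes "finite K" "\<And>C. C \<in> K \<Longrightarrow> finite C" "pairwise disjnt K"
  shows "card {S. S \<subseteq> \<Union>K \<and> (\<forall>C\<in>K. card (S \<inter> C) = l C)} = (\<Prod>C\<in>K. card C choose l C)"
proof -
  define F where "F = {S. S \<subseteq> \<Union>K \<and> (\<forall>C\<in>K. card (S \<inter> C) = l C)}"
  define P where "P = (\<Pi>\<^sub>E C\<in>K. {B. B \<subseteq> C \<and> card B = l C})"
  have disj: "C \<inter> D = {}" if "C \<in> K" "D \<in> K" "C \<noteq> D" for C D
    using assms(3) that unfolding pairwise_def disjnt_def by blast
  have Int_Union: "\<Union>(g ` K) \<inter> C = g C" if g: "g \<in> P" and C: "C \<in> K" for g C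
  proof -
    have "g D \<subseteq> D" if "D \<in> K" for D using g that unfolding P_def by auto
    then show ?thesis using C disj by blast
  qed
  have "bij_betw (\<lambda>S. \<lambda>C\<in>K. S \<inter> C) F P"
  proof (rule bij_betw_byWitness[where f' = "\<lambda>g. \<Union>(g ` K)"])
    show "\<forall>S\<in>F. \<Union>((\<lambda>C\<in>K. S \<inter> C) ` K) = S" unfolding F_def by auto
    show "\<forall>g\<in>P. (\<lambda>C\<in>K. \<Union>(g ` K) \<inter> C) = g"
    proof
      fix g assume g: "g \<in> P"
      show "(\<lambda>C\<in>K. \<Union>(g ` K) \<inter> C) = g"
      proof
        fix C show "(\<lambda>C\<in>K. \<Union>(g ` K) \<inter> C) C = g C"
          using Int_Union[OF g] g unfolding P_def by (cases "C \<in> K") auto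
      qed
    qed
    show "(\<lambda>S. \<lambda>C\<in>K. S \<inter> C) ` F \<subseteq> P" unfolding F_def P_def by auto
    show "(\<lambda>g. \<Union>(g ` K)) ` P \<subseteq> F"
    proof
      fix S assume "S \<in> (\<lambda>g. \<Union>(g ` K)) ` P"
      then obtain g where g: "g \<in> P" "S = \<Union>(g ` K)" by blast
      then have "S \<subseteq> \<Union>K" unfolding P_def by auto
      moreover have "card (S \<inter> C) = l C" if "C \<in> K" for C
        using Int_Union[OF g(1) that] g that unfolding P_def by auto
      ultimately show "S \<in> F" unfolding F_def by blast
    qed
  qed
  then have "card F = card P" by (rule bij_betw_same_card)
  also have "\<dots> = (\<Prod>C\<in>K. card C choose l C)"
    unfolding P_def using assms(1,2) by (simp add: card_PiE n_subsets)
  finally show ?thesis unfolding F_def .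
qed

text \<open>Grouping the \<open>k\<close>-sets by how many elements they take from each block.\<close>
lemma card_subsets_not_in_one_block:
  fixes K :: "'a set set" and k :: nat
  assumes K: "finite K" "\<And>C. C \<in> K \<Longrightarrow> finite C" "pairwise disjnt K"
  defines "L \<equiv> {l \<in> K \<rightarrow>\<^sub>E {0..<k}. (\<Sum>C\<in>K. l C) = k}"
  shows "card {S. S \<subseteq> \<Union>K \<and> card S = k \<and> \<not> (\<exists>C\<in>K. S \<subseteq> C)} = (\<Sum>l\<in>L. \<Prod>C\<in>K. card C choose l C)"
proof -
  define fibre where "fibre l = {S. S \<subseteq> \<Union>K \<and> (\<forall>C\<in>K. card (S \<inter> C) = l C)}" for l
  have "finite (\<Union>K)" using K(1,2) by (rule finite_Union)
  have card_S: "card S = (\<Sum>C\<in>K. card (S \<inter> C))" if "S \<subseteq> \<Union>K" for S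
    using card_eq_sum_card_Int[OF K that] .
  have "{S. S \<subseteq> \<Union>K \<and> card S = k \<and> \<not> (\<exists>C\<in>K. S \<subseteq> C)} = (\<Union>l\<in>L. fibre l)"
  proof (intro equalityI subsetI)
    fix S assume S: "S \<in> {S. S \<subseteq> \<Union>K \<and> card S = k \<and> \<not> (\<exists>C\<in>K. S \<subseteq> C)}"
    then have "finite S" using finite_subset[OF _ \<open>finite (\<Union>K)\<close>] by blast
    have "card (S \<inter> C) < k" if "C \<in> K" for C
    proof -
      have "S \<inter> C \<noteq> S" using S that by blast
      then show ?thesis
        using S \<open>finite S\<close> card_subset_eq[of S "S \<inter> C"] card_mono[of S "S \<inter> C"] by fastforce
    qed
    then have "(\<lambda>C\<in>K. card (S \<inter> C)) \<in> L" using S card_S unfolding L_def by auto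
    moreover have "S \<in> fibre (\<lambda>C\<in>K. card (S \<inter> C))" using S unfolding fibre_def by auto
    ultimately show "S \<in> (\<Union>l\<in>L. fibre l)" by blast
  next
    fix S assume "S \<in> (\<Union>l\<in>L. fibre l)"
    then obtain l where l: "l \<in> L" "S \<in> fibre l" by blast
    then have "S \<subseteq> \<Union>K" "card S = k" using card_S unfolding L_def fibre_def by auto
    moreover have "\<not> S \<subseteq> C" if "C \<in> K" for C
      using l that \<open>card S = k\<close> unfolding L_def fibre_def by (fastforce simp: Int_absorb2)
    ultimately show "S \<in> {S. S \<subseteq> \<Union>K \<and> card S = k \<and> \<not> (\<exists>C\<in>K. S \<subseteq> C)}" by blast
  qed
  moreover have "card (\<Union>l\<in>L. fibre l) = (\<Sum>l\<in>L. card (fibre l))"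
  proof (rule card_UN_disjoint)
    have "finite (K \<rightarrow>\<^sub>E {0..<k})" using K(1) by (simp add: finite_PiE)
    then show "finite L" unfolding L_def by (rule finite_subset[rotated]) blast
    show "\<forall>l\<in>L. finite (fibre l)"
      unfolding fibre_def using \<open>finite (\<Union>K)\<close> by (auto intro: finite_subset)
    show "\<forall>l\<in>L. \<forall>l'\<in>L. l \<noteq> l' \<longrightarrow> fibre l \<inter> fibre l' = {}"
    proof (intro ballI impI)
      fix l l' assume "l \<in> L" "l' \<in> L" "l \<noteq> l'"
      then obtain C where "C \<in> K" "l C \<noteq> l' C" unfolding L_def by (metis (lifting) PiE_ext mem_Collect_eq)
      then show "fibre l \<inter> fibre l' = {}" unfolding fibre_def by auto
    qed
  qed
  moreover have "card (fibre l) = (\<Prod>C\<in>K. card C choose l C)" for l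
    unfolding fibre_def using card_subsets_with_profile[OF K] .
  ultimately show ?thesis by simp
qed

lemma N_k_eq_card:
  assumes "symp E" "finite A"
  shows "N_k k E A = card {S. S \<subseteq> A \<and> card S = k \<and> \<not> (\<exists>C\<in>components E A. S \<subseteq> C)}"
proof -
  have "finite C" if "C \<in> components E A" for C
    using that finite_subset[OF components_subset assms(2)] by blast
  from card_subsets_not_in_one_block[OF finite_components[OF assms(2)] this
      pairwise_disjnt_components[OF assms(1)]]
  show ?thesis unfolding N_k_def Union_components by simp
qed

section \<open>Spanning trees\<close>

lemma card_edges_ge_card_vertices:
  assumes "finite W" "W \<noteq> {}"
    and edges: "\<forall>e\<in>F. \<exists>x y. e = {x, y} \<and> x \<in> W \<and> y \<in> W"
    and conn: "\<forall>x\<in>W. \<forall>y\<in>W. (\<lambda>a b. {a, b} \<in> F)\<^sup>*\<^sup>* x y"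
  shows "card W - 1 \<le> card F"
proof -
  define R where "R = (\<lambda>a b. {a, b} \<in> F)"
  obtain r where r: "r \<in> W" using assms(2) by auto
  obtain p where p: "\<And>w. w \<in> W - {r} \<Longrightarrow> R w (p w) \<and> gdist R (p w) r < gdist R w r"
    using gdist_parent_map[of W R r] conn r unfolding R_def by blast
  have "F \<subseteq> Pow W" using edges by auto
  then have "finite F" using assms(1) finite_subset by blast
  moreover have "inj_on (\<lambda>w. {w, p w}) (W - {r})"
  proof (rule inj_onI)
    fix w w' assume w: "w \<in> W - {r}" "w' \<in> W - {r}" and eq: "{w, p w} = {w', p w'}"
    show "w = w'"
    proof (rule ccontr)
      assume "w \<noteq> w'"
      then have "w = p w'" "w' = p w" using eq by (auto simp: doubleton_eq_iff)
      then show False using p[OF w(1)] p[OF w(2)] by simp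
    qed
  qed
  moreover have "(\<lambda>w. {w, p w}) ` (W - {r}) \<subseteq> F" using p unfolding R_def by auto
  ultimately have "card (W - {r}) \<le> card F" using card_inj_on_le by blast
  then show ?thesis using r assms(1) by simp
qed

lemma connected_subgraph_card_edges_ge:
  assumes "finite V" and WF: "connected_subgraph V E W F"
  shows "card W - 1 \<le> card F"
proof (rule card_edges_ge_card_vertices)
  show "finite W" using WF assms(1) finite_subset unfolding connected_subgraph_def by blast
  show "W \<noteq> {}" using WF unfolding connected_subgraph_def by blast
  show "\<forall>e\<in>F. \<exists>x y. e = {x, y} \<and> x \<in> W \<and> y \<in> W" using WF unfolding connected_subgraph_def by blast
  show "\<forall>x\<in>W. \<forall>y\<in>W. (\<lambda>a b. {a, b} \<in> F)\<^sup>*\<^sup>* x y" using WF unfolding connected_subgraph_def by blast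
qed

lemma connected_subgraph_spanning:
  assumes "finite X" "X \<noteq> {}" "X \<subseteq> V" "symp E"
    and conn: "\<forall>x\<in>X. \<forall>y\<in>X. reach_in E X x y"
  obtains F where "connected_subgraph V E X F" "card F \<le> card X - 1"
proof -
  define R where "R = induced_edge E X"
  obtain r where r: "r \<in> X" using assms(2) by auto
  obtain p where p: "\<And>w. w \<in> X - {r} \<Longrightarrow> R w (p w) \<and> gdist R (p w) r < gdist R w r"
    using gdist_parent_map[of X R r] conn r unfolding R_def reach_in_eq by blast
  define F where "F = (\<lambda>w. {w, p w}) ` (X - {r})"
  define T where "T = (\<lambda>a b. {a, b} \<in> F)"
  have "card F \<le> card (X - {r})" unfolding F_def using assms(1) by (simp add: card_image_le)
  then have card_F: "card F \<le> card X - 1" using r assms(1) by simp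
  have edges: "\<forall>e\<in>F. \<exists>x y. e = {x, y} \<and> E x y \<and> x \<in> X \<and> y \<in> X"
    using p unfolding F_def R_def induced_edge_def by blast
  have to_root: "T\<^sup>*\<^sup>* w r" if "w \<in> X" for w
    using that
  proof (induction "gdist R w r" arbitrary: w rule: less_induct)
    case less
    show ?case
    proof (cases "w = r")
      case False
      then have "T w (p w)" "p w \<in> X" "gdist R (p w) r < gdist R w r"
        using p[of w] less.prems unfolding T_def F_def R_def induced_edge_def by auto
      then show ?thesis using less.hyps by (metis converse_rtranclp_into_rtranclp)
    qed simp
  qed
  have "symp T" unfolding T_def by (simp add: symp_def insert_commute)
  then have "\<forall>x\<in>X. \<forall>y\<in>X. T\<^sup>*\<^sup>* x y"
    using to_root by (metis rtranclp_trans symp_rtranclp sympD)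
  then have "connected_subgraph V E X F"
    unfolding connected_subgraph_def T_def using assms(2,3) edges by blast
  then show thesis using card_F by (rule that)
qed

section \<open>Blocks and geodesics\<close>

lemma simple_graph_finite: "simple_graph V E \<Longrightarrow> finite V"
  unfolding simple_graph_def by blast

lemma simple_graph_symp: "simple_graph V E \<Longrightarrow> symp E"
  unfolding simple_graph_def by (blast intro: sympI)

lemma simple_graph_irrefl: "simple_graph V E \<Longrightarrow> \<not> E x x"
  unfolding simple_graph_def by blast

lemma simple_graph_edge_mem: "simple_graph V E \<Longrightarrow> E x y \<Longrightarrow> x \<in> V \<and> y \<in> V"
  unfolding simple_graph_def by blast

lemma reach_in_simple_graph:
  assumes "simple_graph V E"
  shows "reach_in E V = E\<^sup>*\<^sup>*"
proof -
  have "induced_edge E V = E" unfolding induced_edge_def using simple_graph_edge_mem[OF assms] by blast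
  then show ?thesis by (simp add: reach_in_eq)
qed

lemma biconn_on_subset_block:
  assumes "finite V" "biconn_on E T" "T \<subseteq> V"
  obtains B where "is_block V E B" "T \<subseteq> B"
proof -
  define P where "P B \<longleftrightarrow> T \<subseteq> B \<and> B \<subseteq> V \<and> biconn_on E B" for B
  have "P T" unfolding P_def using assms by blast
  moreover have "\<forall>B. P B \<longrightarrow> card B < Suc (card V)"
    unfolding P_def using card_mono[OF assms(1)] by (simp add: le_imp_less_Suc)
  ultimately obtain B where B: "P B" "\<And>B'. P B' \<Longrightarrow> card B' \<le> card B"
    using ex_has_greatest_nat[of P T card "Suc (card V)"] by blast
  have "is_block V E B"
    unfolding is_block_def
  proof (intro conjI allI impI)
    show "B \<subseteq> V" "biconn_on E B" using B(1) unfolding P_def by blast+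
    fix B' assume B': "B \<subset> B' \<and> B' \<subseteq> V"
    show "\<not> biconn_on E B'"
    proof
      assume "biconn_on E B'"
      then have "card B' \<le> card B" using B B' unfolding P_def by blast
      moreover have "card B < card B'" using B' finite_subset[OF _ assms(1)] by (meson psubset_card_mono)
      ultimately show False by simp
    qed
  qed
  then show thesis using B(1) that unfolding P_def by blast
qed

definition geodesic_interval :: "('a \<Rightarrow> 'a \<Rightarrow> bool) \<Rightarrow> 'a \<Rightarrow> 'a \<Rightarrow> 'a set" where
  "geodesic_interval R a b =
     {u. R\<^sup>*\<^sup>* a u \<and> R\<^sup>*\<^sup>* u b \<and> gdist R a u + gdist R u b = gdist R a b}"

lemma endpoints_in_geodesic_interval:
  "R\<^sup>*\<^sup>* a b \<Longrightarrow> a \<in> geodesic_interval R a b \<and> b \<in> geodesic_interval R a b"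
  unfolding geodesic_interval_def by simp

lemma geodesic_interval_subset:
  "a \<in> A \<Longrightarrow> geodesic_interval (induced_edge E A) a b \<subseteq> A"
  unfolding geodesic_interval_def reach_in_eq[symmetric] using reach_in_mem by fastforce

lemma geodesic_interval_commute:
  assumes "symp R"
  shows "geodesic_interval R a b = geodesic_interval R b a"
proof -
  have "R\<^sup>*\<^sup>* x y \<longleftrightarrow> R\<^sup>*\<^sup>* y x" for x y
    using sympD[OF symp_rtranclp[OF assms]] by blast
  then show ?thesis
    unfolding geodesic_interval_def gdist_commute[OF assms, of a] gdist_commute[OF assms, of _ b]
    by (auto simp: gdist_commute[OF assms, of b a])
qed

lemma geodesic_interval_reach_start:
  assumes RE: "\<And>x y. R x y \<Longrightarrow> E y x" and "u \<in> geodesic_interval R a b"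
  shows "reach_in E (insert u {z \<in> geodesic_interval R a b. gdist R a z < gdist R a u}) u a"
  using assms(2)
proof (induction "gdist R a u" arbitrary: u rule: less_induct)
  case less
  let ?I = "geodesic_interval R a b"
  show ?case
  proof (cases "u = a")
    case False
    have au: "R\<^sup>*\<^sup>* a u" and ub: "R\<^sup>*\<^sup>* u b" and u: "gdist R a u + gdist R u b = gdist R a b"
      using less.prems unfolding geodesic_interval_def by auto
    obtain c where c: "R\<^sup>*\<^sup>* a c" "R c u" "gdist R a u = Suc (gdist R a c)"
      using gdist_last_step[OF au not_sym[OF False]] .
    have cb: "R\<^sup>*\<^sup>* c b" using c(2) ub by (rule converse_rtranclp_into_rtranclp)
    have "gdist R c b \<le> Suc (gdist R u b)" using c(2) ub by (rule gdist_le_Suc_first)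
    moreover have "gdist R a b \<le> gdist R a c + gdist R c b" using c(1) cb by (rule gdist_triangle)
    ultimately have "gdist R a c + gdist R c b = gdist R a b" using c(3) u by linarith
    then have cI: "c \<in> ?I" unfolding geodesic_interval_def using c(1) cb by blast
    have "gdist R a c < gdist R a u" using c(3) by simp
    have "reach_in E (insert u {z \<in> ?I. gdist R a z < gdist R a u}) u c"
      using RE[OF c(2)] \<open>gdist R a c < gdist R a u\<close> cI by (intro reach_in_edge) auto
    moreover have "reach_in E (insert c {z \<in> ?I. gdist R a z < gdist R a c}) c a"
      using less.hyps[OF \<open>gdist R a c < gdist R a u\<close> cI] .
    then have "reach_in E (insert u {z \<in> ?I. gdist R a z < gdist R a u}) c a"
      by (rule reach_in_mono[rotated]) (use \<open>gdist R a c < gdist R a u\<close> cI in auto)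
    ultimately show ?thesis by (rule reach_in_trans)
  qed simp
qed

lemma geodesic_interval_reach_end:
  assumes "symp R" and RE: "\<And>x y. R x y \<Longrightarrow> E y x" and u: "u \<in> geodesic_interval R a b"
  shows "reach_in E (insert u {z \<in> geodesic_interval R a b. gdist R a u < gdist R a z}) u b"
proof -
  have I: "geodesic_interval R a b = geodesic_interval R b a"
    by (rule geodesic_interval_commute[OF assms(1)])
  have dist_sum: "gdist R a z + gdist R b z = gdist R a b" if "z \<in> geodesic_interval R a b" for z
    using that gdist_commute[OF assms(1), of b z] unfolding geodesic_interval_def by simp
  have "gdist R a u < gdist R a z \<longleftrightarrow> gdist R b z < gdist R b u" if "z \<in> geodesic_interval R a b" for z
    using dist_sum[OF that] dist_sum[OF u] by linarith
  then have "{z \<in> geodesic_interval R a b. gdist R a u < gdist R a z}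
      = {z \<in> geodesic_interval R b a. gdist R b z < gdist R b u}"
    unfolding I by blast
  moreover have "u \<in> geodesic_interval R b a" using u unfolding I .
  ultimately show ?thesis using geodesic_interval_reach_start[OF RE] by simp
qed

text \<open>Deleting a vertex \<open>v\<close> of the interval, every other vertex of the interval still reaches
  \<open>a\<close> or \<open>b\<close>, hence \<open>w\<close>, along a geodesic missing \<open>v\<close>.\<close>
lemma connected_on_delete_geodesic_interval:
  assumes "symp E" "w \<notin> A" "a \<in> A" "E w a" "E w b"
    and v: "v \<in> geodesic_interval (induced_edge E A) a b"
  shows "connected_on E (insert w (geodesic_interval (induced_edge E A) a b) - {v})"
proof -
  define R where "R = induced_edge E A"
  define I where "I = geodesic_interval R a b"
  have "symp R" unfolding R_def using assms(1) by (rule symp_induced_edge)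
  have RE: "E y x" if "R x y" for x y
    using sympD[OF \<open>symp R\<close> that] unfolding R_def induced_edge_def by simp
  have "v \<in> I" using v unfolding I_def R_def .
  then have ab: "R\<^sup>*\<^sup>* a b" unfolding I_def geodesic_interval_def by (blast intro: rtranclp_trans)
  have ends: "a \<in> I" "b \<in> I" unfolding I_def using endpoints_in_geodesic_interval[OF ab] by auto
  have "w \<notin> I" using geodesic_interval_subset[OF assms(3)] assms(2) unfolding I_def R_def by blast
  have "E a w" "E b w" using sympD[OF assms(1) assms(4)] sympD[OF assms(1) assms(5)] .
  show ?thesis unfolding R_def[symmetric] I_def[symmetric]
  proof (rule connected_onI_hub[OF assms(1)])
    show "w \<in> insert w I - {v}" using \<open>v \<in> I\<close> \<open>w \<notin> I\<close> by blast
    fix x assume x: "x \<in> insert w I - {v}"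
    show "reach_in E (insert w I - {v}) x w"
    proof (cases "x = w")
      case False
      then have "x \<in> I" "x \<noteq> v" using x by auto
      show ?thesis
      proof (cases "gdist R a x \<le> gdist R a v")
        case True
        have "a \<noteq> v"
          using True \<open>x \<in> I\<close> \<open>x \<noteq> v\<close> gdist_eq_0_iff[of R a x] unfolding I_def geodesic_interval_def
          by force
        have "reach_in E (insert w I - {v}) x a"
          using geodesic_interval_reach_start[OF RE \<open>x \<in> I\<close>[unfolded I_def]]
          by (rule reach_in_mono[rotated]) (use True \<open>x \<in> I\<close> \<open>x \<noteq> v\<close> in \<open>auto simp: I_def\<close>)
        moreover have "reach_in E (insert w I - {v}) a w"
          by (rule reach_in_edge[where E=E, OF \<open>E a w\<close>]) (use \<open>a \<noteq> v\<close> ends \<open>w \<notin> I\<close> \<open>v \<in> I\<close> in auto)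
        ultimately show ?thesis by (rule reach_in_trans)
      next
        case False
        have "gdist R a x \<le> gdist R a b" using \<open>x \<in> I\<close> unfolding I_def geodesic_interval_def by simp
        then have "b \<noteq> v" using False by auto
        have "reach_in E (insert w I - {v}) x b"
          using geodesic_interval_reach_end[OF \<open>symp R\<close> RE \<open>x \<in> I\<close>[unfolded I_def]]
          by (rule reach_in_mono[rotated]) (use False \<open>x \<in> I\<close> \<open>x \<noteq> v\<close> in \<open>auto simp: I_def\<close>)
        moreover have "reach_in E (insert w I - {v}) b w"
          by (rule reach_in_edge[where E=E, OF \<open>E b w\<close>]) (use \<open>b \<noteq> v\<close> ends \<open>w \<notin> I\<close> \<open>v \<in> I\<close> in auto)
        ultimately show ?thesis by (rule reach_in_trans)
      qed
    qed simp
  qed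
qed

lemma biconn_on_insert_geodesic_interval:
  assumes "symp E" "w \<notin> A" "a \<in> A" "E w a" "E w b" "reach_in E A a b"
  shows "biconn_on E (insert w (geodesic_interval (induced_edge E A) a b))"
proof -
  define R where "R = induced_edge E A"
  define I where "I = geodesic_interval R a b"
  have "symp R" unfolding R_def using assms(1) by (rule symp_induced_edge)
  have RE: "E y x" if "R x y" for x y
    using sympD[OF \<open>symp R\<close> that] unfolding R_def induced_edge_def by simp
  have ab: "R\<^sup>*\<^sup>* a b" using assms(6) unfolding R_def reach_in_eq .
  have "a \<in> I" unfolding I_def using endpoints_in_geodesic_interval[OF ab] by auto
  have "w \<notin> I" using geodesic_interval_subset[OF assms(3)] assms(2) unfolding I_def R_def by blast
  have "E a w" using sympD[OF assms(1) assms(4)] .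
  have conn_I: "connected_on E I"
  proof (rule connected_onI_hub[OF assms(1) \<open>a \<in> I\<close>])
    fix x assume "x \<in> I"
    show "reach_in E I x a"
      using geodesic_interval_reach_start[OF RE \<open>x \<in> I\<close>[unfolded I_def]]
      by (rule reach_in_mono[rotated]) (use \<open>x \<in> I\<close> in \<open>auto simp: I_def\<close>)
  qed
  have conn_T: "connected_on E (insert w I)"
  proof (rule connected_onI_hub[OF assms(1)])
    fix x assume x: "x \<in> insert w I"
    show "reach_in E (insert w I) x w"
    proof (cases "x = w")
      case False
      then have "reach_in E (insert w I) x a"
        using x conn_I \<open>a \<in> I\<close> reach_in_mono[of I "insert w I"] unfolding connected_on_def by blast
      moreover have "reach_in E (insert w I) a w"
        by (rule reach_in_edge[where E=E, OF \<open>E a w\<close>]) (use \<open>a \<in> I\<close> in auto)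
      ultimately show ?thesis by (rule reach_in_trans)
    qed simp
  qed simp
  have "\<not> cut_vertex E (insert w I) v" for v
  proof (cases "v \<in> insert w I")
    case True
    then have "connected_on E (insert w I - {v})"
      using connected_on_delete_geodesic_interval[OF assms(1-5), of v] conn_I \<open>w \<notin> I\<close>
      unfolding I_def R_def by (cases "v = w") auto
    with conn_T show ?thesis by (rule not_cut_vertex_if_connected_on_delete)
  qed (simp add: cut_vertex_def)
  with conn_T show ?thesis unfolding biconn_on_def I_def R_def by blast
qed

lemma block_graph_common_neighbour_adjacent:
  assumes "simple_graph V E" "block_graph V E"
    and "E w a" "E w b" "a \<noteq> b" "reach_in E (V - {w}) a b"
  shows "E a b"
proof -
  define I where "I = geodesic_interval (induced_edge E (V - {w})) a b"
  have "a \<in> V" "w \<in> V" "a \<noteq> w"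
    using simple_graph_edge_mem[OF assms(1,3)] simple_graph_irrefl[OF assms(1)] assms(3) by auto
  then have "biconn_on E (insert w I)"
    unfolding I_def using assms(3-6)
    by (intro biconn_on_insert_geodesic_interval simple_graph_symp[OF assms(1)]) auto
  moreover have "insert w I \<subseteq> V"
    using \<open>w \<in> V\<close> geodesic_interval_subset[of a "V - {w}" E b] \<open>a \<in> V\<close> \<open>a \<noteq> w\<close>
    unfolding I_def by blast
  ultimately obtain B where B: "is_block V E B" "insert w I \<subseteq> B"
    using biconn_on_subset_block[OF simple_graph_finite[OF assms(1)]] by blast
  have ab: "(induced_edge E (V - {w}))\<^sup>*\<^sup>* a b" using assms(6) unfolding reach_in_eq .
  have "a \<in> B" "b \<in> B" using endpoints_in_geodesic_interval[OF ab] B(2) unfolding I_def by auto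
  then show ?thesis using assms(2,5) B(1) unfolding block_graph_def by blast
qed

lemma reach_in_gdist_ball:
  assumes "simple_graph V E" "u \<in> V" "E\<^sup>*\<^sup>* u y"
  shows "reach_in E {v \<in> V. gdist E v y \<le> gdist E u y} u y"
  using assms(2,3)
proof (induction "gdist E u y" arbitrary: u rule: less_induct)
  case less
  show ?case
  proof (cases "u = y")
    case False
    obtain c where c: "E u c" "E\<^sup>*\<^sup>* c y" "gdist E u y = Suc (gdist E c y)"
      using gdist_first_step[OF less.prems(2) False] .
    have "c \<in> V" using simple_graph_edge_mem[OF assms(1) c(1)] by blast
    have "gdist E c y < gdist E u y" using c(3) by simp
    have "reach_in E {v \<in> V. gdist E v y \<le> gdist E u y} u c"
      by (rule reach_in_edge[where E=E, OF c(1)]) (use \<open>c \<in> V\<close> less.prems(1) c(3) in auto)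
    moreover have "reach_in E {v \<in> V. gdist E v y \<le> gdist E c y} c y"
      using less.hyps[OF \<open>gdist E c y < gdist E u y\<close> \<open>c \<in> V\<close> c(2)] .
    then have "reach_in E {v \<in> V. gdist E v y \<le> gdist E u y} c y"
      by (rule reach_in_mono[rotated]) (use c(3) in auto)
    ultimately show ?thesis by (rule reach_in_trans)
  qed simp
qed

text \<open>Otherwise \<open>x\<close> and the successor of \<open>w\<close> would lie in a common block with \<open>w\<close>, and their
  adjacency would shortcut the geodesic.\<close>
lemma geodesic_successor_separates:
  assumes "simple_graph V E" "block_graph V E"
    and "E x w" "E\<^sup>*\<^sup>* w y" "gdist E x y = Suc (gdist E w y)" "w \<noteq> y"
  shows "\<not> reach_in E (V - {w}) x y"
proof
  assume xy: "reach_in E (V - {w}) x y"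
  obtain u where u: "E w u" "E\<^sup>*\<^sup>* u y" "gdist E w y = Suc (gdist E u y)"
    using gdist_first_step[OF assms(4,6)] .
  have "reach_in E {v \<in> V. gdist E v y \<le> gdist E u y} u y"
    using reach_in_gdist_ball[OF assms(1) _ u(2)] simple_graph_edge_mem[OF assms(1) u(1)] by blast
  then have "reach_in E (V - {w}) u y" by (rule reach_in_mono[rotated]) (use u(3) in auto)
  then have "reach_in E (V - {w}) x u"
    using xy reach_in_sym[OF simple_graph_symp[OF assms(1)]] reach_in_trans by metis
  moreover have "E w x" using assms(3) simple_graph_symp[OF assms(1)] by (blast dest: sympD)
  moreover have "x \<noteq> u" using assms(5) u(3) by auto
  ultimately have "E x u" using block_graph_common_neighbour_adjacent[OF assms(1,2) _ u(1)] by blast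
  then have "gdist E x y \<le> Suc (gdist E u y)" using u(2) by (rule gdist_le_Suc_first)
  with assms(5) u(3) show False by simp
qed

section \<open>Steiner distance in block graphs\<close>

definition separates :: "'a set \<Rightarrow> ('a \<Rightarrow> 'a \<Rightarrow> bool) \<Rightarrow> 'a \<Rightarrow> 'a set \<Rightarrow> bool" where
  "separates V E v S \<longleftrightarrow> v \<notin> S \<and> (\<exists>s\<in>S. \<exists>t\<in>S. \<not> reach_in E (V - {v}) s t)"

lemma reach_in_delete_from_separator:
  assumes "symp E" and S: "\<forall>s\<in>S. \<forall>t\<in>S. reach_in E (V - {w}) s t"
    and z: "z \<in> S \<or> separates V E z S" and "s \<in> S"
  shows "reach_in E (V - {w}) z s"
proof (rule ccontr)
  assume zs: "\<not> reach_in E (V - {w}) z s"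
  then have "z \<notin> S" using S \<open>s \<in> S\<close> by blast
  then obtain s1 s2 where s12: "s1 \<in> S" "s2 \<in> S" "\<not> reach_in E (V - {z}) s1 s2"
    using z unfolding separates_def by blast
  text \<open>The component of \<open>s1\<close> in \<open>V - {w}\<close> contains all of \<open>S\<close> but not \<open>z\<close>.\<close>
  have "(V - {w}) \<inter> {u. reach_in E (V - {w}) s1 u} \<subseteq> V - {z}"
  proof
    fix u assume u: "u \<in> (V - {w}) \<inter> {u. reach_in E (V - {w}) s1 u}"
    have "reach_in E (V - {w}) s s1" using S \<open>s \<in> S\<close> s12(1) by blast
    moreover have "reach_in E (V - {w}) s1 u" using u by blast
    ultimately have "reach_in E (V - {w}) u s" by (metis reach_in_trans reach_in_sym[OF assms(1)])
    then have "u \<noteq> z" using zs by blast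
    then show "u \<in> V - {z}" using u by blast
  qed
  moreover have "reach_in E (V - {w}) s1 s2" using S s12(1,2) by blast
  then have "reach_in E ((V - {w}) \<inter> {u. reach_in E (V - {w}) s1 u}) s1 s2"
    by (rule reach_in_restrict)
  ultimately have "reach_in E (V - {z}) s1 s2" by (rule reach_in_mono)
  with s12(3) show False ..
qed

lemma separates_if_separates_hull_pair:
  assumes "symp E" "S \<noteq> {}" "w \<notin> S"
    and "x \<in> S \<or> separates V E x S" "y \<in> S \<or> separates V E y S"
    and "\<not> reach_in E (V - {w}) x y"
  shows "separates V E w S"
  unfolding separates_def
proof (intro conjI)
  show "w \<notin> S" by fact
  show "\<exists>s\<in>S. \<exists>t\<in>S. \<not> reach_in E (V - {w}) s t"
  proof (rule ccontr)
    assume "\<not> (\<exists>s\<in>S. \<exists>t\<in>S. \<not> reach_in E (V - {w}) s t)"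
    then have S: "\<forall>s\<in>S. \<forall>t\<in>S. reach_in E (V - {w}) s t" by blast
    obtain s where "s \<in> S" using assms(2) by blast
    have "reach_in E (V - {w}) x s" "reach_in E (V - {w}) y s"
      using reach_in_delete_from_separator[OF assms(1) S _ \<open>s \<in> S\<close>] assms(4,5) by simp_all
    then have "reach_in E (V - {w}) x y" by (metis reach_in_sym[OF assms(1)] reach_in_trans)
    with assms(6) show False ..
  qed
qed

text \<open>Induction along a geodesic, whose inner vertices separate \<open>S\<close> again.\<close>
lemma separator_hull_connected:
  assumes sg: "simple_graph V E" and "block_graph V E" "connected_on E V" "S \<subseteq> V" "S \<noteq> {}"
    and "x \<in> S \<union> {v\<in>V. separates V E v S}" "y \<in> S \<union> {v\<in>V. separates V E v S}"
  shows "reach_in E (S \<union> {v\<in>V. separates V E v S}) x y"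
proof -
  define X where "X = S \<union> {v\<in>V. separates V E v S}"
  have "X \<subseteq> V" unfolding X_def using assms(4) by blast
  have "y \<in> X" using assms(7) unfolding X_def .
  have "x \<in> X \<Longrightarrow> reach_in E X x y"
  proof (induction "gdist E x y" arbitrary: x rule: less_induct)
    case less
    have "reach_in E V x y"
      using assms(3) less.prems \<open>y \<in> X\<close> \<open>X \<subseteq> V\<close> unfolding connected_on_def by blast
    then have "E\<^sup>*\<^sup>* x y" unfolding reach_in_simple_graph[OF sg] .
    show ?case
    proof (cases "x = y")
      case False
      obtain w where w: "E x w" "E\<^sup>*\<^sup>* w y" "gdist E x y = Suc (gdist E w y)"
        using gdist_first_step[OF \<open>E\<^sup>*\<^sup>* x y\<close> False] .
      have "w \<in> X"
      proof (cases "w = y \<or> w \<in> S")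
        case False
        then have "\<not> reach_in E (V - {w}) x y"
          using geodesic_successor_separates[OF sg assms(2) w] by blast
        then have "separates V E w S"
          using separates_if_separates_hull_pair[OF simple_graph_symp[OF sg] assms(5)] False
            less.prems \<open>y \<in> X\<close> unfolding X_def by blast
        then show ?thesis using simple_graph_edge_mem[OF sg w(1)] unfolding X_def by blast
      qed (use \<open>y \<in> X\<close> in \<open>auto simp: X_def\<close>)
      have "reach_in E X x w" by (rule reach_in_edge[where E=E, OF w(1) less.prems \<open>w \<in> X\<close>])
      moreover have "reach_in E X w y" using less.hyps[of w] w(3) \<open>w \<in> X\<close> by simp
      ultimately show ?thesis by (rule reach_in_trans)
    qed simp
  qed
  then show ?thesis using assms(6) unfolding X_def by blast
qed

lemma separator_in_connected_subgraph:
  assumes "simple_graph V E" "connected_subgraph V E W F" "S \<subseteq> W" "separates V E v S"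
  shows "v \<in> W"
proof (rule ccontr)
  assume "v \<notin> W"
  obtain s t where st: "s \<in> S" "t \<in> S" "\<not> reach_in E (V - {v}) s t"
    using assms(4) unfolding separates_def by blast
  have W: "W \<subseteq> V" "\<forall>e\<in>F. \<exists>x y. e = {x, y} \<and> E x y \<and> x \<in> W \<and> y \<in> W"
    "\<forall>x\<in>W. \<forall>y\<in>W. (\<lambda>a b. {a, b} \<in> F)\<^sup>*\<^sup>* x y"
    using assms(2) unfolding connected_subgraph_def by blast+
  have edge: "induced_edge E (V - {v}) a b" if "{a, b} \<in> F" for a b
  proof -
    have "\<exists>x y. {a, b} = {x, y} \<and> E x y \<and> x \<in> W \<and> y \<in> W" using bspec[OF W(2) that] .
    then obtain x y where xy: "{a, b} = {x, y}" "E x y" "x \<in> W" "y \<in> W" by blast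
    then have "a = x \<and> b = y \<or> a = y \<and> b = x" by (simp add: doubleton_eq_iff)
    then have "E a b \<and> a \<in> W \<and> b \<in> W"
      using xy(2-4) sympD[OF simple_graph_symp[OF assms(1)] xy(2)] by auto
    then show ?thesis unfolding induced_edge_def using W(1) \<open>v \<notin> W\<close> by blast
  qed
  have "(\<lambda>a b. {a, b} \<in> F)\<^sup>*\<^sup>* s t" using W(3) st assms(3) by blast
  then have "(induced_edge E (V - {v}))\<^sup>*\<^sup>* s t"
    by (rule rtranclp_mono[THEN predicate2D, rotated]) (simp add: edge predicate2I)
  with st(3) show False unfolding reach_in_eq by simp
qed

lemma steiner_dist_block_graph:
  assumes sg: "simple_graph V E" and "block_graph V E" "connected_on E V" "S \<subseteq> V" "S \<noteq> {}"
  shows "steiner_dist V E S = card S - 1 + card {v\<in>V. separates V E v S}"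
proof -
  define X where "X = S \<union> {v\<in>V. separates V E v S}"
  have "finite V" using simple_graph_finite[OF sg] .
  have "X \<subseteq> V" "X \<noteq> {}" unfolding X_def using assms(4,5) by blast+
  then have "finite X" using \<open>finite V\<close> finite_subset by blast
  have card_X: "card X - 1 = card S - 1 + card {v\<in>V. separates V E v S}"
  proof -
    have "finite S" using assms(4) \<open>finite V\<close> finite_subset by blast
    moreover have "S \<inter> {v\<in>V. separates V E v S} = {}" unfolding separates_def by blast
    ultimately have "card X = card S + card {v\<in>V. separates V E v S}"
      unfolding X_def using \<open>finite V\<close> by (simp add: card_Un_disjoint)
    moreover have "card S \<ge> 1" using \<open>finite S\<close> assms(5) by (simp add: Suc_leI card_gt_0_iff)
    ultimately show ?thesis by simp
  qed
  define P where "P m \<longleftrightarrow> (\<exists>W F. connected_subgraph V E W F \<and> S \<subseteq> W \<and> card F = m)" for m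
  have lower: "card X - 1 \<le> m" if "P m" for m
  proof -
    obtain W F where WF: "connected_subgraph V E W F" "S \<subseteq> W" "card F = m"
      using \<open>P m\<close> unfolding P_def by blast
    have "W \<subseteq> V" using WF(1) unfolding connected_subgraph_def by blast
    then have "finite W" using \<open>finite V\<close> finite_subset by blast
    have "card W - 1 \<le> m" using connected_subgraph_card_edges_ge[OF \<open>finite V\<close> WF(1)] WF(3) by simp
    moreover have "X \<subseteq> W" unfolding X_def using WF(2) separator_in_connected_subgraph[OF sg WF(1,2)] by blast
    then have "card X \<le> card W" using \<open>finite W\<close> by (rule card_mono[rotated])
    ultimately show ?thesis by linarith
  qed
  obtain F where F: "connected_subgraph V E X F" "card F \<le> card X - 1"
    using connected_subgraph_spanning[OF \<open>finite X\<close> \<open>X \<noteq> {}\<close> \<open>X \<subseteq> V\<close> simple_graph_symp[OF sg]]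
      separator_hull_connected[OF assms] unfolding X_def by blast
  then have "P (card F)" unfolding P_def X_def by blast
  then have "Least P = card X - 1" using F(2) lower by (metis LeastI Least_le le_antisym)
  then show ?thesis unfolding steiner_dist_def P_def[abs_def] card_X[symmetric] .
qed

lemma card_separated_subsets:
  assumes sg: "simple_graph V E" and "connected_on E V" "v \<in> V" "1 \<le> k"
  shows "card {S. S \<subseteq> V \<and> card S = k \<and> separates V E v S}
           = (if cut_vertex E V v then N_k k E (V - {v}) else 0)"
proof (cases "cut_vertex E V v")
  case True
  have "separates V E v S \<longleftrightarrow> S \<subseteq> V - {v} \<and> \<not> (\<exists>C\<in>components E (V - {v}). S \<subseteq> C)"
    if "S \<subseteq> V" "card S = k" for S
  proof -
    have "S \<noteq> {}" using that(2) assms(4) by auto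
    then show ?thesis
      using subset_component_iff[OF simple_graph_symp[OF sg], of S "V - {v}"] that(1)
      unfolding separates_def by blast
  qed
  then have "{S. S \<subseteq> V \<and> card S = k \<and> separates V E v S}
      = {S. S \<subseteq> V - {v} \<and> card S = k \<and> \<not> (\<exists>C\<in>components E (V - {v}). S \<subseteq> C)}"
    by blast
  also have "card \<dots> = N_k k E (V - {v})"
    using N_k_eq_card[OF simple_graph_symp[OF sg]] simple_graph_finite[OF sg] by simp
  finally show ?thesis using True by simp
next
  case False
  have "{S. S \<subseteq> V \<and> card S = k \<and> separates V E v S} = {}"
    using reach_in_delete_non_cut_vertex[OF simple_graph_finite[OF sg] assms(2) False assms(3)]
    unfolding separates_def by blast
  then show ?thesis using False by (simp only: card.empty if_False)
qed

lemma sum_card_filter_swap: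
  assumes "finite A" "finite B"
  shows "(\<Sum>x\<in>A. card {y\<in>B. P x y}) = (\<Sum>y\<in>B. card {x\<in>A. P x y})"
proof -
  have card_eq: "card {z\<in>Z. Q z} = (\<Sum>z\<in>Z. if Q z then 1 else 0)" if "finite Z" for Z and Q :: "_ \<Rightarrow> bool"
    using sum.inter_filter[OF that, of "\<lambda>_. 1::nat" Q] by simp
  show ?thesis unfolding card_eq[OF assms(1)] card_eq[OF assms(2)] by (rule sum.swap)
qed

theorem mainTheorem4:
  fixes V :: "'a set" and E :: "'a \<Rightarrow> 'a \<Rightarrow> bool" and n k :: nat
  assumes "simple_graph V E"
    and "connected_on E V"
    and "block_graph V E"
    and "card V = n"
    and "2 \<le> k" and "k \<le> n"
  shows "steiner_wiener k V E
           = (\<Sum>v\<in>{v\<in>V. cut_vertex E V v}. N_k k E (V - {v})) + (k - 1) * (n choose k)"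
proof -
  define Sk where "Sk = {S. S \<subseteq> V \<and> card S = k}"
  have "finite V" using simple_graph_finite[OF assms(1)] .
  then have "finite Sk" "card Sk = n choose k"
    unfolding Sk_def using assms(4) by (simp_all add: n_subsets)
  have "steiner_dist V E S = (k - 1) + card {v\<in>V. separates V E v S}" if "S \<in> Sk" for S
    using that steiner_dist_block_graph[OF assms(1,3,2), of S] assms(5) unfolding Sk_def by fastforce
  then have "steiner_wiener k V E = (\<Sum>S\<in>Sk. (k - 1) + card {v\<in>V. separates V E v S})"
    unfolding steiner_wiener_def Sk_def[symmetric] by (rule sum.cong[OF refl])
  also have "\<dots> = (k - 1) * (n choose k) + (\<Sum>v\<in>V. card {S\<in>Sk. separates V E v S})"
    using \<open>card Sk = n choose k\<close> sum_card_filter_swap[OF \<open>finite Sk\<close> \<open>finite V\<close>]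
    by (simp add: sum.distrib)
  also have "(\<Sum>v\<in>V. card {S\<in>Sk. separates V E v S})
      = (\<Sum>v\<in>V. if cut_vertex E V v then N_k k E (V - {v}) else 0)"
    using card_separated_subsets[OF assms(1,2) _, of _ k] assms(5) unfolding Sk_def
    by (intro sum.cong refl) (simp add: conj_assoc)
  also have "\<dots> = (\<Sum>v\<in>{v\<in>V. cut_vertex E V v}. N_k k E (V - {v}))"
    using \<open>finite V\<close> by (simp add: sum.inter_filter)
  finally show ?thesis by simp
qed

end
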